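(* Let $P\in\mathbb{R}^N$ and $a\in\mathbb{R}$. If the equation $H(x,Du+P)=a$ in $\mathbb{R}^N$ admits a bounded $\mathbb{Z}^N$-periodic upper semicontinuous viscosity subsolution and a bounded $\mathbb{Z}^N$-periodic lower semicontinuous viscosity supersolution, then $a=\overline H(P)$.
   Context: $V:\mathbb{R}^N\to\mathbb{R}^N$ is $\mathbb{Z}^N$-periodic and Lipschitz continuous; $H(x,p)=|p|+p\cdot V(x)$. $\overline H(P)=\inf\{a\in\mathbb{R}\mid H(x,Du+P)=a$ admits an upper semicontinuous, bounded, $\mathbb{Z}^N$-periodic viscosity subsolution on $\mathbb{R}^N\}$. *)

theory Defs
  imports "HOL-Analysis.Analysis"
begin

definition int_vec :: "real^'n \<Rightarrow> bool" where
  "int_vec k \<longleftrightarrow> (\<forall>i. k $ i \<in> \<int>)"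

definition Zn_periodic :: "(real^'n \<Rightarrow> 'b) \<Rightarrow> bool" where
  "Zn_periodic f \<longleftrightarrow> (\<forall>x k. int_vec k \<longrightarrow> f (x + k) = f x)"

definition Ham :: "(real^'n \<Rightarrow> real^'n) \<Rightarrow> real^'n \<Rightarrow> real^'n \<Rightarrow> real" where
  "Ham V x p = norm p + p \<bullet> V x"

definition usc :: "(real^'n \<Rightarrow> real) \<Rightarrow> bool" where
  "usc u \<longleftrightarrow> (\<forall>x t. u x < t \<longrightarrow> eventually (\<lambda>y. u y < t) (at x))"

definition lsc :: "(real^'n \<Rightarrow> real) \<Rightarrow> bool" where
  "lsc u \<longleftrightarrow> (\<forall>x t. t < u x \<longrightarrow> eventually (\<lambda>y. t < u y) (at x))"

definition C1_grad :: "(real^'n \<Rightarrow> real) \<Rightarrow> (real^'n \<Rightarrow> real^'n) \<Rightarrow> bool" where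
  "C1_grad \<phi> g \<longleftrightarrow> (\<forall>x. (\<phi> has_derivative (\<lambda>h. g x \<bullet> h)) (at x)) \<and> continuous_on UNIV g"

definition visc_sub :: "(real^'n \<Rightarrow> real^'n) \<Rightarrow> real^'n \<Rightarrow> real \<Rightarrow> (real^'n \<Rightarrow> real) \<Rightarrow> bool" where
  "visc_sub V P a u \<longleftrightarrow>
     (\<forall>\<phi> g x0. C1_grad \<phi> g \<longrightarrow>
        (\<exists>e>0. \<forall>y\<in>ball x0 e. u y - \<phi> y \<le> u x0 - \<phi> x0) \<longrightarrow>
        Ham V x0 (g x0 + P) \<le> a)"

definition visc_super :: "(real^'n \<Rightarrow> real^'n) \<Rightarrow> real^'n \<Rightarrow> real \<Rightarrow> (real^'n \<Rightarrow> real) \<Rightarrow> bool" where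
  "visc_super V P a u \<longleftrightarrow>
     (\<forall>\<phi> g x0. C1_grad \<phi> g \<longrightarrow>
        (\<exists>e>0. \<forall>y\<in>ball x0 e. u y - \<phi> y \<ge> u x0 - \<phi> x0) \<longrightarrow>
        Ham V x0 (g x0 + P) \<ge> a)"

definition Hbar :: "(real^'n \<Rightarrow> real^'n) \<Rightarrow> real^'n \<Rightarrow> real" where
  "Hbar V P = Inf {a. \<exists>u. usc u \<and> bounded (range u) \<and> Zn_periodic u \<and> visc_sub V P a u}"

end

theory Submission
  imports Defs
begin

text \<open>
  Every admissible level is at least \<open>a\<close>, by a comparison principle: a periodic
  subsolution at level \<open>b\<close> and a periodic supersolution at level \<open>a\<close> force \<open>a \<le> b\<close>.
  This is proved by doubling the variables: \<open>u x - w y - |x - y|\<^sup>2 / (2\<epsilon>)\<close> attains its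
  maximum by periodicity and upper semicontinuity, and at a maximum point \<open>(x\<^sub>\<epsilon>, y\<^sub>\<epsilon>)\<close>
  the two viscosity inequalities hold with the same momentum \<open>p = (x\<^sub>\<epsilon> - y\<^sub>\<epsilon>)/\<epsilon> + P\<close>,
  so \<open>a - b \<le> L |p| |x\<^sub>\<epsilon> - y\<^sub>\<epsilon>|\<close>. Since the maximal values are bounded, along
  \<open>\<epsilon> = 2\<^sup>-\<^sup>k\<close> some drop from one to the next is small, which makes \<open>|x\<^sub>\<epsilon> - y\<^sub>\<epsilon>|\<^sup>2/\<epsilon>\<close>
  small, and hence the right-hand side arbitrarily small.
\<close>

definition upper_semicontinuous :: "('a::topological_space \<Rightarrow> real) \<Rightarrow> bool" where
  "upper_semicontinuous f \<longleftrightarrow> (\<forall>t. open {z. f z < t})"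

lemma upper_semicontinuous_add:
  assumes "upper_semicontinuous f" "upper_semicontinuous g"
  shows "upper_semicontinuous (\<lambda>z. f z + g z)"
  unfolding upper_semicontinuous_def
proof
  fix t
  have "{z. f z + g z < t} = (\<Union>s. {z. f z < s} \<inter> {z. g z < t - s})"
  proof (intro set_eqI iffI)
    fix z assume "z \<in> {z. f z + g z < t}"
    then have "z \<in> {z. f z < (f z + t - g z) / 2} \<inter> {z. g z < t - (f z + t - g z) / 2}"
      by (simp add: field_simps)
    then show "z \<in> (\<Union>s. {z. f z < s} \<inter> {z. g z < t - s})" by blast
  qed auto
  moreover have "open (\<Union>s. {z. f z < s} \<inter> {z. g z < t - s})"
    using assms unfolding upper_semicontinuous_def by blast
  ultimately show "open {z. f z + g z < t}" by simp
qed

lemma upper_semicontinuous_compose: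
  assumes "upper_semicontinuous f" "continuous_on UNIV g"
  shows "upper_semicontinuous (\<lambda>z. f (g z))"
  unfolding upper_semicontinuous_def
proof
  fix t
  have "open (g -` {y. f y < t})"
    using assms unfolding upper_semicontinuous_def by (intro open_vimage) auto
  then show "open {z. f (g z) < t}" by (simp add: vimage_def)
qed

lemma continuous_imp_upper_semicontinuous:
  fixes f :: "'a::topological_space \<Rightarrow> real"
  assumes "continuous_on UNIV f"
  shows "upper_semicontinuous f"
  unfolding upper_semicontinuous_def
  by (intro allI open_Collect_less assms continuous_on_const)

lemma usc_imp_upper_semicontinuous:
  assumes "usc u"
  shows "upper_semicontinuous u"
  unfolding upper_semicontinuous_def
proof
  fix t
  show "open {z. u z < t}"
  proof (rule Topological_Spaces.openI)
    fix x assume x: "x \<in> {z. u z < t}"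
    then have "eventually (\<lambda>y. u y < t) (at x)"
      using assms unfolding usc_def by blast
    then obtain S where S: "open S" "x \<in> S" "\<And>y. y \<in> S \<Longrightarrow> y \<noteq> x \<Longrightarrow> u y < t"
      unfolding eventually_at_topological by blast
    have "S \<subseteq> {z. u z < t}"
      using S(3) x by blast
    then show "\<exists>T. open T \<and> x \<in> T \<and> T \<subseteq> {z. u z < t}"
      using S(1,2) by blast
  qed
qed

lemma lsc_imp_upper_semicontinuous_uminus:
  assumes "lsc w"
  shows "upper_semicontinuous (\<lambda>z. - w z)"
proof -
  have "usc (\<lambda>z. - w z)"
    using assms unfolding lsc_def usc_def by (metis (no_types, lifting) eventually_mono minus_less_iff)
  then show ?thesis by (rule usc_imp_upper_semicontinuous)
qed

lemma upper_semicontinuous_attains_sup: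
  assumes "upper_semicontinuous f" "compact S" "S \<noteq> {}"
  shows "\<exists>z\<in>S. \<forall>y\<in>S. f y \<le> f z"
proof (rule ccontr)
  assume "\<not> ?thesis"
  then have cover: "S \<subseteq> (\<Union>y\<in>S. {z. f z < f y})" by (auto simp: not_le)
  have "open {z. f z < f y}" if "y \<in> S" for y
    using assms(1) unfolding upper_semicontinuous_def by simp
  then obtain K where K: "K \<subseteq> S" "finite K" "S \<subseteq> (\<Union>y\<in>K. {z. f z < f y})"
    using compactE_image[OF assms(2) _ cover] by metis
  then have "K \<noteq> {}" using assms(3) by auto
  then have "Max (f ` K) \<in> f ` K" using K(2) by (intro Max_in) auto
  then obtain y where y: "y \<in> K" "f y = Max (f ` K)" by auto
  then obtain y' where "y' \<in> K" "f y < f y'" using K(1,3) by blast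
  moreover have "f y' \<le> Max (f ` K)" using \<open>y' \<in> K\<close> K(2) by simp
  ultimately show False using y(2) by simp
qed

lemma exists_lattice_translate_in_unit_cube:
  fixes x :: "real^'n"
  obtains k where "int_vec k" "x - k \<in> cbox 0 (\<chi> i. 1)"
proof
  show "int_vec (\<chi> i. of_int \<lfloor>x $ i\<rfloor>)" unfolding int_vec_def by simp
  show "x - (\<chi> i. of_int \<lfloor>x $ i\<rfloor>) \<in> cbox 0 (\<chi> i. 1)"
    unfolding mem_box_cart
  proof (intro allI conjI)
    fix i
    have "of_int \<lfloor>x $ i\<rfloor> \<le> x $ i" "x $ i < of_int \<lfloor>x $ i\<rfloor> + 1" by simp_all
    then show "0 $ i \<le> (x - (\<chi> i. of_int \<lfloor>x $ i\<rfloor>)) $ i"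
      and "(x - (\<chi> i. of_int \<lfloor>x $ i\<rfloor>)) $ i \<le> ((\<chi> i. 1) :: real^'n) $ i"
      by (simp_all del: real_of_int_floor_add_one_gt)
  qed
qed

text \<open>After translating \<open>x\<close> into the unit cube only a compact set matters.\<close>

lemma diagonally_periodic_attains_sup:
  fixes F :: "real^'n \<Rightarrow> real^'n \<Rightarrow> real"
  assumes usc: "upper_semicontinuous (\<lambda>z. F (fst z) (snd z))"
    and periodic: "\<And>x y k. int_vec k \<Longrightarrow> F (x + k) (y + k) = F x y"
    and far: "\<And>x y. R < norm (x - y) \<Longrightarrow> F x y \<le> F 0 0"
  shows "\<exists>x0 y0. \<forall>x y. F x y \<le> F x0 y0"
proof -
  obtain r where r: "\<And>x. x \<in> cbox 0 (\<chi> i. 1) \<Longrightarrow> norm (x::real^'n) \<le> r"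
    using bounded_cbox[unfolded bounded_iff] by metis
  define S where "S = cbox (0::real^'n) (\<chi> i. 1) \<times> cball (0::real^'n) (r + \<bar>R\<bar>)"
  have "(0::real^'n) \<in> cbox 0 (\<chi> i. 1)"
    by (simp add: mem_box_cart)
  moreover have "0 \<le> r"
    using r[OF \<open>0 \<in> cbox 0 (\<chi> i. 1)\<close>] by simp
  ultimately have "(0, 0) \<in> S"
    unfolding S_def by simp
  moreover have "compact S"
    unfolding S_def by (intro compact_Times compact_cbox compact_cball)
  ultimately obtain z0 where z0: "\<And>z. z \<in> S \<Longrightarrow> F (fst z) (snd z) \<le> F (fst z0) (snd z0)"
    using upper_semicontinuous_attains_sup[OF usc] by blast
  have "F x y \<le> F (fst z0) (snd z0)" for x y
  proof -
    obtain k where k: "int_vec k" "x - k \<in> cbox 0 (\<chi> i. 1)"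
      using exists_lattice_translate_in_unit_cube .
    have F_eq: "F x y = F (x - k) (y - k)"
      using periodic[OF k(1), of "x - k" "y - k"] by simp
    show ?thesis
    proof (cases "norm (x - y) \<le> R")
      case True
      have "norm (y - k) \<le> norm (x - k) + norm ((x - k) - (y - k))"
        by (metis norm_minus_commute norm_triangle_sub)
      also have "\<dots> \<le> r + \<bar>R\<bar>"
        using r[OF k(2)] True by simp
      finally have "(x - k, y - k) \<in> S"
        unfolding S_def using k(2) by simp
      then show ?thesis using z0[OF \<open>(x - k, y - k) \<in> S\<close>] F_eq by simp
    next
      case False
      then show ?thesis using far[of x y] z0[OF \<open>(0, 0) \<in> S\<close>] by simp
    qed
  qed
  then show ?thesis by blast
qed

definition doubling :: "(real^'n \<Rightarrow> real) \<Rightarrow> (real^'n \<Rightarrow> real) \<Rightarrow> real \<Rightarrow> real^'n \<Rightarrow> real^'n \<Rightarrow> real"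
  where "doubling u w \<epsilon> x y = u x - w y - (norm (x - y))\<^sup>2 / (2 * \<epsilon>)"

lemma doubling_same: "doubling u w \<epsilon> x x = u x - w x"
  by (simp add: doubling_def)

lemma doubling_le:
  assumes "\<And>x. \<bar>u x\<bar> \<le> B" "\<And>y. \<bar>w y\<bar> \<le> B" "0 < \<epsilon>"
  shows "doubling u w \<epsilon> x y \<le> 2 * B"
proof -
  have "0 \<le> (norm (x - y))\<^sup>2 / (2 * \<epsilon>)" using assms(3) by simp
  then show ?thesis
    using assms(1)[of x] assms(2)[of y] unfolding doubling_def abs_le_iff by linarith
qed

lemma doubling_attains_sup:
  fixes u w :: "real^'n \<Rightarrow> real"
  assumes u: "usc u" "Zn_periodic u" "\<And>x. \<bar>u x\<bar> \<le> B"
    and w: "lsc w" "Zn_periodic w" "\<And>x. \<bar>w x\<bar> \<le> B"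
    and "0 < \<epsilon>"
  shows "\<exists>x0 y0. \<forall>x y. doubling u w \<epsilon> x y \<le> doubling u w \<epsilon> x0 y0"
proof (rule diagonally_periodic_attains_sup)
  have u': "upper_semicontinuous (\<lambda>z::(real^'n) \<times> (real^'n). u (fst z))"
    using usc_imp_upper_semicontinuous[OF u(1)] continuous_on_fst[OF continuous_on_id]
    by (rule upper_semicontinuous_compose)
  have w': "upper_semicontinuous (\<lambda>z::(real^'n) \<times> (real^'n). - w (snd z))"
    using lsc_imp_upper_semicontinuous_uminus[OF w(1)] continuous_on_snd[OF continuous_on_id]
    by (rule upper_semicontinuous_compose)
  have "continuous_on UNIV
      (\<lambda>z::(real^'n) \<times> (real^'n). - (norm (fst z - snd z))\<^sup>2 / (2 * \<epsilon>))"
    by (intro continuous_intros) (use \<open>0 < \<epsilon>\<close> in simp)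
  from upper_semicontinuous_add[OF upper_semicontinuous_add[OF u' w']
      continuous_imp_upper_semicontinuous[OF this]]
  show "upper_semicontinuous (\<lambda>z. doubling u w \<epsilon> (fst z) (snd z))"
    unfolding doubling_def by simp
  show "doubling u w \<epsilon> (x + k) (y + k) = doubling u w \<epsilon> x y" if "int_vec k" for x y k
    using u(2) w(2) that unfolding Zn_periodic_def doubling_def by simp
  show "doubling u w \<epsilon> x y \<le> doubling u w \<epsilon> 0 0"
    if "sqrt (8 * \<epsilon> * B) < norm (x - y)" for x y
  proof -
    have "sqrt (8 * \<epsilon> * B) < sqrt ((norm (x - y))\<^sup>2)"
      using that by simp
    then have "8 * \<epsilon> * B < (norm (x - y))\<^sup>2"
      by (simp only: real_sqrt_less_iff)
    then have "4 * B < (norm (x - y))\<^sup>2 / (2 * \<epsilon>)"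
      using \<open>0 < \<epsilon>\<close> by (simp add: field_simps)
    then show ?thesis
      using u(3)[of x] u(3)[of 0] w(3)[of y] w(3)[of 0]
      unfolding doubling_def abs_le_iff by simp
  qed
qed

text \<open>The penalty at \<open>2\<epsilon>\<close> is half the penalty at \<open>\<epsilon>\<close>.\<close>

lemma doubling_penalty_le_drop:
  assumes "0 < \<epsilon>" and max: "\<And>x y. doubling u w (2 * \<epsilon>) x y \<le> M"
  shows "(norm (x0 - y0))\<^sup>2 / \<epsilon> \<le> 4 * (M - doubling u w \<epsilon> x0 y0)"
  using max[of x0 y0] \<open>0 < \<epsilon>\<close> unfolding doubling_def by (simp add: field_simps)

lemma bounded_drop_imp_small_step:
  fixes m :: "nat \<Rightarrow> real"
  assumes "\<And>k. m 0 - m k \<le> C" "0 < \<eta>"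
  shows "\<exists>k. m k - m (Suc k) \<le> \<eta>"
proof (rule ccontr)
  assume "\<not> ?thesis"
  then have drop: "\<eta> < m k - m (Suc k)" for k by (simp add: not_le)
  have total: "real n * \<eta> \<le> m 0 - m n" for n
  proof (induction n)
    case (Suc n)
    then show ?case using drop[of n] by (simp add: algebra_simps)
  qed simp
  obtain n where "C / \<eta> < real n" using reals_Archimedean2 by blast
  then have "C < real n * \<eta>" using \<open>0 < \<eta>\<close> by (simp add: field_simps)
  then show False using total[of n] assms(1)[of n] by linarith
qed

lemma doubling_maximum_small_penalty:
  fixes u w :: "real^'n \<Rightarrow> real"
  assumes u: "usc u" "Zn_periodic u" "\<And>x. \<bar>u x\<bar> \<le> B"
    and w: "lsc w" "Zn_periodic w" "\<And>x. \<bar>w x\<bar> \<le> B"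
    and "0 < \<delta>"
  obtains \<epsilon> x0 y0 where "0 < \<epsilon>" "\<epsilon> \<le> 1"
    "\<And>x y. doubling u w \<epsilon> x y \<le> doubling u w \<epsilon> x0 y0"
    "(norm (x0 - y0))\<^sup>2 / \<epsilon> \<le> 4 * \<delta>"
proof -
  have "\<forall>\<epsilon>. \<exists>x0 y0. 0 < \<epsilon> \<longrightarrow> (\<forall>x y. doubling u w \<epsilon> x y \<le> doubling u w \<epsilon> x0 y0)"
    using doubling_attains_sup[OF u w] by blast
  then obtain xm ym where max:
    "\<And>\<epsilon> x y. 0 < \<epsilon> \<Longrightarrow> doubling u w \<epsilon> x y \<le> doubling u w \<epsilon> (xm \<epsilon>) (ym \<epsilon>)"
    by metis
  define m where "m k = doubling u w (1 / 2 ^ k) (xm (1 / 2 ^ k)) (ym (1 / 2 ^ k))" for k :: nat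
  have "m 0 - m k \<le> 4 * B" for k
  proof -
    have "m 0 \<le> 2 * B"
      unfolding m_def by (rule doubling_le[OF u(3) w(3)]) simp
    moreover have "u 0 - w 0 \<le> m k"
      using max[of "1 / 2 ^ k" 0 0] unfolding m_def doubling_same by simp
    ultimately show ?thesis
      using u(3)[of 0] w(3)[of 0] unfolding abs_le_iff by linarith
  qed
  then obtain k where k: "m k - m (Suc k) \<le> \<delta>"
    using bounded_drop_imp_small_step \<open>0 < \<delta>\<close> by blast
  define \<epsilon> :: real where "\<epsilon> = 1 / 2 ^ Suc k"
  have "0 < \<epsilon>" "\<epsilon> \<le> 1"
    unfolding \<epsilon>_def using one_le_power[of "2::real" "Suc k"] by simp_all
  moreover have "(norm (xm \<epsilon> - ym \<epsilon>))\<^sup>2 / \<epsilon> \<le> 4 * (m k - m (Suc k))"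
  proof -
    have "2 * \<epsilon> = 1 / 2 ^ k" unfolding \<epsilon>_def by simp
    then have "doubling u w (2 * \<epsilon>) x y \<le> m k" for x y
      unfolding m_def using max by simp
    then show ?thesis
      using doubling_penalty_le_drop[OF \<open>0 < \<epsilon>\<close>] unfolding m_def \<epsilon>_def by blast
  qed
  ultimately show ?thesis
    using that[of \<epsilon> "xm \<epsilon>" "ym \<epsilon>"] max k by simp
qed

lemma C1_grad_scaled_sq_dist:
  fixes x0 :: "real^'n"
  shows "C1_grad (\<lambda>x. c * (norm (x - x0))\<^sup>2) (\<lambda>x. (2 * c) *\<^sub>R (x - x0))"
  unfolding C1_grad_def
proof (intro conjI allI)
  show "((\<lambda>x. c * (norm (x - x0))\<^sup>2) has_derivative (\<lambda>h. ((2 * c) *\<^sub>R (x - x0)) \<bullet> h)) (at x)"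
    for x
    by (auto intro!: derivative_eq_intros
        simp: power2_norm_eq_inner fun_eq_iff inner_commute algebra_simps)
qed (intro continuous_intros)

lemma visc_sub_at_max:
  assumes "visc_sub V P b u" "C1_grad \<phi> g" "\<And>y. u y - \<phi> y \<le> u x0 - \<phi> x0"
  shows "Ham V x0 (g x0 + P) \<le> b"
  using assms unfolding visc_sub_def by (meson zero_less_one)

lemma visc_super_at_min:
  assumes "visc_super V P a w" "C1_grad \<phi> g" "\<And>y. w x0 - \<phi> x0 \<le> w y - \<phi> y"
  shows "a \<le> Ham V x0 (g x0 + P)"
  using assms unfolding visc_super_def by (meson zero_less_one)

lemma viscosity_at_doubling_max:
  assumes "visc_sub V P b u" "visc_super V P a w" "0 < \<epsilon>"
    and max: "\<And>x y. doubling u w \<epsilon> x y \<le> doubling u w \<epsilon> x0 y0"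
  shows "Ham V x0 ((1 / \<epsilon>) *\<^sub>R (x0 - y0) + P) \<le> b"
    and "a \<le> Ham V y0 ((1 / \<epsilon>) *\<^sub>R (x0 - y0) + P)"
proof -
  have "u y - 1 / (2 * \<epsilon>) * (norm (y - y0))\<^sup>2 \<le> u x0 - 1 / (2 * \<epsilon>) * (norm (x0 - y0))\<^sup>2"
    for y using max[of y y0] unfolding doubling_def by simp
  from visc_sub_at_max[OF assms(1) C1_grad_scaled_sq_dist this]
  show "Ham V x0 ((1 / \<epsilon>) *\<^sub>R (x0 - y0) + P) \<le> b" by simp
  have "w y0 - - 1 / (2 * \<epsilon>) * (norm (y0 - x0))\<^sup>2 \<le> w y - - 1 / (2 * \<epsilon>) * (norm (y - x0))\<^sup>2"
    for y using max[of x0 y] unfolding doubling_def by (simp add: norm_minus_commute)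
  from visc_super_at_min[OF assms(2) C1_grad_scaled_sq_dist this]
  have "a \<le> Ham V y0 ((2 * (- 1 / (2 * \<epsilon>))) *\<^sub>R (y0 - x0) + P)" .
  also have "(2 * (- 1 / (2 * \<epsilon>))) *\<^sub>R (y0 - x0) = (1 / \<epsilon>) *\<^sub>R (x0 - y0)"
    using \<open>0 < \<epsilon>\<close> by (simp add: algebra_simps)
  finally show "a \<le> Ham V y0 ((1 / \<epsilon>) *\<^sub>R (x0 - y0) + P)" .
qed

lemma Ham_diff_le:
  assumes "L-lipschitz_on UNIV V"
  shows "Ham V y p - Ham V x p \<le> L * norm p * dist x y"
proof -
  have "Ham V y p - Ham V x p = p \<bullet> (V y - V x)"
    unfolding Ham_def by (simp add: inner_diff_right)
  also have "\<dots> \<le> norm p * norm (V y - V x)" by (rule norm_cauchy_schwarz)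
  also have "\<dots> \<le> norm p * (L * dist x y)"
    using lipschitz_onD[OF assms, of x y]
    by (simp add: dist_norm norm_minus_commute mult_left_mono)
  finally show ?thesis by (simp add: mult_ac)
qed

lemma penalty_gap_bound:
  fixes d \<epsilon> \<theta> L c :: real
  assumes "0 < \<epsilon>" "\<epsilon> \<le> 1" "0 \<le> L" "0 \<le> c" "0 < \<theta>" "\<theta> \<le> 1" "0 \<le> d"
    and penalty: "d\<^sup>2 / \<epsilon> \<le> 4 * \<theta>\<^sup>2"
  shows "L * (d / \<epsilon> + c) * d \<le> L * (4 + 2 * c) * \<theta>"
proof -
  have "d\<^sup>2 \<le> d\<^sup>2 / \<epsilon>" using assms(1,2) by (simp add: le_divide_eq mult_left_le)
  also have "\<dots> \<le> (2 * \<theta>)\<^sup>2" using penalty by (simp add: power_mult_distrib)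
  finally have "d \<le> 2 * \<theta>" by (rule power2_le_imp_le) (use assms(5) in simp)
  have "\<theta>\<^sup>2 \<le> \<theta>" using assms(5,6) by (simp add: power2_eq_square mult_left_le_one_le)
  have "(d / \<epsilon> + c) * d = d\<^sup>2 / \<epsilon> + c * d" by (simp add: power2_eq_square algebra_simps)
  also have "\<dots> \<le> 4 * \<theta> + c * (2 * \<theta>)"
    using penalty \<open>\<theta>\<^sup>2 \<le> \<theta>\<close> \<open>d \<le> 2 * \<theta>\<close> assms(4) by (intro add_mono mult_left_mono) auto
  also have "\<dots> = (4 + 2 * c) * \<theta>" by (simp add: algebra_simps)
  finally show ?thesis
    using mult_left_mono[OF _ assms(3)] by (simp add: mult.assoc)
qed

lemma nonpos_if_le_mult_small:
  fixes x K :: real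
  assumes "\<And>\<theta>. 0 < \<theta> \<Longrightarrow> \<theta> \<le> 1 \<Longrightarrow> x \<le> K * \<theta>"
  shows "x \<le> 0"
proof (rule field_le_epsilon)
  fix e :: real assume "0 < e"
  define \<theta> where "\<theta> = min 1 (e / (\<bar>K\<bar> + 1))"
  have \<theta>: "0 < \<theta>" "\<theta> \<le> 1" using \<open>0 < e\<close> by (auto simp: \<theta>_def)
  have "K * \<theta> \<le> \<bar>K\<bar> * \<theta>" using \<theta> by (simp add: mult_right_mono)
  also have "\<dots> \<le> \<bar>K\<bar> * (e / (\<bar>K\<bar> + 1))"
    unfolding \<theta>_def by (intro mult_left_mono) auto
  also have "\<dots> \<le> e" using \<open>0 < e\<close> by (simp add: field_simps)
  finally show "x \<le> 0 + e" using assms[OF \<theta>] by simp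
qed

lemma comparison_periodic:
  fixes V :: "real^'n \<Rightarrow> real^'n" and u w :: "real^'n \<Rightarrow> real"
  assumes L: "L-lipschitz_on UNIV V"
    and u: "usc u" "bounded (range u)" "Zn_periodic u" "visc_sub V P b u"
    and w: "lsc w" "bounded (range w)" "Zn_periodic w" "visc_super V P a w"
  shows "a \<le> b"
proof -
  obtain B where uB: "\<And>x. \<bar>u x\<bar> \<le> B" and wB: "\<And>x. \<bar>w x\<bar> \<le> B"
    using u(2) w(2) unfolding bounded_iff real_norm_def
    by (metis max.cobounded1 max.cobounded2 order_trans rangeI)
  have "a - b \<le> L * (4 + 2 * norm P) * \<theta>" if "0 < \<theta>" "\<theta> \<le> 1" for \<theta>
  proof -
    obtain \<epsilon> x0 y0 where \<epsilon>: "0 < \<epsilon>" "\<epsilon> \<le> 1"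
      and max: "\<And>x y. doubling u w \<epsilon> x y \<le> doubling u w \<epsilon> x0 y0"
      and penalty: "(norm (x0 - y0))\<^sup>2 / \<epsilon> \<le> 4 * \<theta>\<^sup>2"
      using doubling_maximum_small_penalty[OF u(1,3) uB w(1,3) wB, of "\<theta>\<^sup>2"] \<open>0 < \<theta>\<close> by auto
    define p where "p = (1 / \<epsilon>) *\<^sub>R (x0 - y0) + P"
    have sub: "Ham V x0 p \<le> b" and super: "a \<le> Ham V y0 p"
      using viscosity_at_doubling_max[OF u(4) w(4) \<epsilon>(1) max] unfolding p_def by simp_all
    have "norm p \<le> norm (x0 - y0) / \<epsilon> + norm P"
      using norm_triangle_ineq[of "(1 / \<epsilon>) *\<^sub>R (x0 - y0)" P] \<epsilon>(1) unfolding p_def by simp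
    have "a - b \<le> L * norm p * dist x0 y0"
      using sub super Ham_diff_le[OF L, of y0 p x0] by linarith
    also have "\<dots> \<le> L * (norm (x0 - y0) / \<epsilon> + norm P) * norm (x0 - y0)"
      using \<open>norm p \<le> _\<close> lipschitz_on_nonneg[OF L]
      by (simp add: dist_norm mult_right_mono mult_left_mono)
    also have "\<dots> \<le> L * (4 + 2 * norm P) * \<theta>"
      using penalty_gap_bound[OF \<epsilon> lipschitz_on_nonneg[OF L] _ that _ penalty] by simp
    finally show ?thesis .
  qed
  then have "a - b \<le> 0"
    by (rule nonpos_if_le_mult_small)
  then show "a \<le> b" by simp
qed

theorem lemma6p10:
  fixes V :: "real^'n \<Rightarrow> real^'n" and P :: "real^'n" and a :: real
  assumes "Zn_periodic V"
    and "\<exists>L. L-lipschitz_on UNIV V"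
    and "\<exists>u. usc u \<and> bounded (range u) \<and> Zn_periodic u \<and> visc_sub V P a u"
    and "\<exists>w. lsc w \<and> bounded (range w) \<and> Zn_periodic w \<and> visc_super V P a w"
  shows "a = Hbar V P"
proof -
  obtain L where L: "L-lipschitz_on UNIV V" using assms(2) by blast
  obtain w where w: "lsc w" "bounded (range w)" "Zn_periodic w" "visc_super V P a w"
    using assms(4) by blast
  have "a \<le> b" if "b \<in> {b. \<exists>u. usc u \<and> bounded (range u) \<and> Zn_periodic u \<and> visc_sub V P b u}" for b
    using that comparison_periodic[OF L _ _ _ _ w] by blast
  then show ?thesis
    unfolding Hbar_def using assms(3) by (intro cInf_eq_minimum[symmetric]) auto
qed
end
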